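(* Fix a Markov policy $\pi$, action thresholds $\{C^{\mathbf a}_h\}$ (hence a fixed pseudo-policy $\bar\pi$), and two sets of state thresholds $\{C^{\mathbf x}_h\}$, $\{(C^{\mathbf x}_h)'\}$. Let $\bar d^\pi_0=(\bar d^\pi_0)'=d_0$ and for $h\ge1$, $\bar d^\pi_h=\mathbf P^{\bar\pi}_{h-1}(\bar d^\pi_{h-1}\wedge C^{\mathbf x}_{h-1}d^D_{h-1})$, $(\bar d^\pi_h)'=\mathbf P^{\bar\pi}_{h-1}((\bar d^\pi_{h-1})'\wedge(C^{\mathbf x}_{h-1})'d^D_{h-1})$. Then for each $h\in[H]$: (1) (Monotonicity) if $C^{\mathbf x}_{h'}\le(C^{\mathbf x}_{h'})'$ for all $h'<h$ then $\bar d^\pi_h\le(\bar d^\pi_h)'$; and if $C^{\mathbf x}_{h'}\ge(C^{\mathbf x}_{h'})'$ for all $h'<h$ then $\bar d^\pi_h\ge(\bar d^\pi_h)'$. (2) $\|(\bar d^\pi_h)'-\bar d^\pi_h\|_1\le\sum_{h'<h}|(C^{\mathbf x}_{h'})'-C^{\mathbf x}_{h'}|$. (3) $\big|\|d^\pi_h-(\bar d^\pi_h)'\|_1-\|d^\pi_h-\bar d^\pi_h\|_1\big|\le\sum_{h'<h}|(C^{\mathbf x}_{h'})'-C^{\mathbf x}_{h'}|$.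
   Context: Setting: finite-horizon episodic MDP, measurable state space $\mathcal X$, finite action space $\mathcal A$, $[H]=\{0,\dots,H-1\}$, transitions $P_h$, initial distribution $d_0$; $d^\pi_h$ is the density of $x_h$ under $\pi$. Offline data: $\mathcal D_h$ consists of tuples $(x_h,a_h,x_{h+1})$ generated by an arbitrary roll-in to $x_h$, then $a_h\sim\pi^D_h(\cdot\mid x_h)$ for a Markov single-step policy $\pi^D_h$, then $x_{h+1}\sim P_h$; $d^D_h\in\Delta(\mathcal X)$ is the marginal density of $x_h$ in $\mathcal D_h$. Notation: $a\wedge b=\min(a,b)$ pointwise; $(\mathbf P^{\bar\pi}_hd)(x'):=\iint P_h(x'\mid x,a)\bar\pi_h(a\mid x)d(x)\mathrm dx\,\mathrm da$; the pseudo-policy is $\bar\pi_h:=\pi_h\wedge C^{\mathbf a}_h\pi^D_h$. *)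

theory Defs
  imports "HOL-Probability.Probability"
begin

text \<open>States: type 'x with reference measure M (densities are w.r.t. M).
  Actions: a finite type 'a.  Transition densities: Ph x a x' = P_h(x' | x, a).
  Policies: pol x a = pol(a | x).\<close>

definition Pop :: "'x measure \<Rightarrow> ('x \<Rightarrow> 'a::finite \<Rightarrow> 'x \<Rightarrow> real)
    \<Rightarrow> ('x \<Rightarrow> 'a \<Rightarrow> real) \<Rightarrow> ('x \<Rightarrow> real) \<Rightarrow> 'x \<Rightarrow> real" where
  "Pop M Ph pol d x' = (\<integral>x. (\<Sum>a\<in>UNIV. Ph x a x' * pol x a) * d x \<partial>M)"

definition pseudo_policy :: "(nat \<Rightarrow> 'x \<Rightarrow> 'a \<Rightarrow> real) \<Rightarrow> (nat \<Rightarrow> 'x \<Rightarrow> 'a \<Rightarrow> real)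
    \<Rightarrow> (nat \<Rightarrow> real) \<Rightarrow> nat \<Rightarrow> 'x \<Rightarrow> 'a \<Rightarrow> real" where
  "pseudo_policy pol piD Ca h x a = min (pol h x a) (Ca h * piD h x a)"

primrec dbar :: "'x measure \<Rightarrow> (nat \<Rightarrow> 'x \<Rightarrow> 'a::finite \<Rightarrow> 'x \<Rightarrow> real)
    \<Rightarrow> (nat \<Rightarrow> 'x \<Rightarrow> 'a \<Rightarrow> real) \<Rightarrow> ('x \<Rightarrow> real) \<Rightarrow> (nat \<Rightarrow> 'x \<Rightarrow> real)
    \<Rightarrow> (nat \<Rightarrow> real) \<Rightarrow> nat \<Rightarrow> 'x \<Rightarrow> real" where
  "dbar M P pibar d0 dD Cx 0 = d0"
| "dbar M P pibar d0 dD Cx (Suc h) =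
     Pop M (P h) (pibar h) (\<lambda>x. min (dbar M P pibar d0 dD Cx h x) (Cx h * dD h x))"

primrec dpi :: "'x measure \<Rightarrow> (nat \<Rightarrow> 'x \<Rightarrow> 'a::finite \<Rightarrow> 'x \<Rightarrow> real)
    \<Rightarrow> (nat \<Rightarrow> 'x \<Rightarrow> 'a \<Rightarrow> real) \<Rightarrow> ('x \<Rightarrow> real) \<Rightarrow> nat \<Rightarrow> 'x \<Rightarrow> real" where
  "dpi M P pol d0 0 = d0"
| "dpi M P pol d0 (Suc h) = Pop M (P h) (pol h) (dpi M P pol d0 h)"

definition l1norm :: "'x measure \<Rightarrow> ('x \<Rightarrow> real) \<Rightarrow> real" where
  "l1norm M f = (\<integral>x. \<bar>f x\<bar> \<partial>M)"

end

theory Submission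
  imports Defs
begin

(* Clipping is monotone and 1-Lipschitz in the threshold: pointwise,
   |min b (C' e) - min a (C e)| <= |b - a| + |C' - C| e for e = d^D_h >= 0.
   The operator P^{pibar}_h is integration against a nonnegative kernel of mass at most 1
   (pibar <= pi is sub-stochastic), so it preserves a.e. order and, by Fubini, does not
   increase L1 distances.  Induction on h then gives monotonicity of the clipped densities in
   the thresholds and accumulates |C'_h - C_h| * integral d^D_h <= |C'_h - C_h| per step;
   item (3) is the reverse triangle inequality for the L1 norm. *)

lemma abs_min_diff_le:
  fixes a a' c c' :: real
  shows "\<bar>min a' c' - min a c\<bar> \<le> \<bar>a' - a\<bar> + \<bar>c' - c\<bar>"
  unfolding min_def by (auto simp: abs_if)

lemma l1norm_reverse_triangle:
  assumes A: "integrable M A" and B: "integrable M B" and B': "integrable M B'"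
  shows "\<bar>l1norm M (\<lambda>x. A x - B' x) - l1norm M (\<lambda>x. A x - B x)\<bar> \<le> l1norm M (\<lambda>x. B' x - B x)"
proof -
  have "l1norm M (\<lambda>x. A x - B' x) - l1norm M (\<lambda>x. A x - B x) = (\<integral>x. \<bar>A x - B' x\<bar> - \<bar>A x - B x\<bar> \<partial>M)"
    unfolding l1norm_def using A B B' by (intro Bochner_Integration.integral_diff[symmetric]) auto
  also have "\<bar>\<dots>\<bar> \<le> (\<integral>x. \<bar>\<bar>A x - B' x\<bar> - \<bar>A x - B x\<bar>\<bar> \<partial>M)"
    by (rule integral_abs_bound)
  also have "\<dots> \<le> l1norm M (\<lambda>x. B' x - B x)"
    unfolding l1norm_def using A B B' by (intro integral_mono) auto
  finally show ?thesis .
qed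

locale substochastic_kernel = sigma_finite_measure M
  for M :: "'x measure" and K :: "'x \<Rightarrow> 'x \<Rightarrow> real" +
  assumes kernel_measurable: "(\<lambda>(x, x'). K x x') \<in> borel_measurable (M \<Otimes>\<^sub>M M)"
    and kernel_nonneg: "x \<in> space M \<Longrightarrow> x' \<in> space M \<Longrightarrow> 0 \<le> K x x'"
    and kernel_integrable: "x \<in> space M \<Longrightarrow> integrable M (K x)"
    and kernel_mass_le_1: "x \<in> space M \<Longrightarrow> (\<integral>x'. K x x' \<partial>M) \<le> 1"
begin

interpretation pair_sigma_finite M M ..

lemma integral_abs_kernel_times_le:
  assumes x: "x \<in> space M"
  shows "(\<integral>x'. \<bar>K x x' * c\<bar> \<partial>M) \<le> \<bar>c\<bar>"
proof -
  have "(\<integral>x'. \<bar>K x x' * c\<bar> \<partial>M) = (\<integral>x'. K x x' * \<bar>c\<bar> \<partial>M)"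
    using x kernel_nonneg by (intro Bochner_Integration.integral_cong) (auto simp: abs_mult)
  also have "\<dots> = (\<integral>x'. K x x' \<partial>M) * \<bar>c\<bar>"
    by (rule integral_mult_left_zero)
  also have "\<dots> \<le> 1 * \<bar>c\<bar>"
    using x by (intro mult_right_mono kernel_mass_le_1) auto
  finally show ?thesis by simp
qed

lemma integrable_kernel_product:
  assumes g: "integrable M g"
  shows "integrable (M \<Otimes>\<^sub>M M) (\<lambda>(x, x'). K x x' * g x)"
proof -
  have [measurable]: "g \<in> borel_measurable M"
    using g by (rule borel_measurable_integrable)
  have [measurable]: "(\<lambda>p. K (fst p) (snd p)) \<in> borel_measurable (M \<Otimes>\<^sub>M M)"
    using kernel_measurable by (simp add: case_prod_beta')
  have "(\<lambda>(x, x'). K x x' * g x) \<in> borel_measurable (M \<Otimes>\<^sub>M M)"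
    unfolding case_prod_beta' by measurable
  moreover have "integrable M (\<lambda>x. \<integral>x'. \<bar>K x x' * g x\<bar> \<partial>M)"
  proof (rule Bochner_Integration.integrable_bound[OF integrable_abs[OF g]])
    show "(\<lambda>x. \<integral>x'. \<bar>K x x' * g x\<bar> \<partial>M) \<in> borel_measurable M"
      by measurable
    show "AE x in M. norm (\<integral>x'. \<bar>K x x' * g x\<bar> \<partial>M) \<le> norm \<bar>g x\<bar>"
    proof (intro AE_I2)
      fix x assume "x \<in> space M"
      moreover have "0 \<le> (\<integral>x'. \<bar>K x x' * g x\<bar> \<partial>M)"
        by (rule integral_nonneg_AE) simp
      ultimately show "norm (\<integral>x'. \<bar>K x x' * g x\<bar> \<partial>M) \<le> norm \<bar>g x\<bar>"
        using integral_abs_kernel_times_le by simp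
    qed
  qed
  moreover have "AE x in M. integrable M (\<lambda>x'. K x x' * g x)"
    using kernel_integrable by (intro AE_I2) simp
  ultimately show ?thesis
    by (intro Fubini_integrable) simp_all
qed

lemma integrable_kernel_transform:
  "integrable M g \<Longrightarrow> integrable M (\<lambda>x'. \<integral>x. K x x' * g x \<partial>M)"
  by (rule integrable_snd[OF integrable_kernel_product])

lemma AE_integrable_kernel_section:
  "integrable M g \<Longrightarrow> AE x' in M. integrable M (\<lambda>x. K x x' * g x)"
  by (rule AE_integrable_snd[OF integrable_kernel_product])

lemma kernel_transform_mono_AE:
  assumes g1: "integrable M g1" and g2: "integrable M g2" and le: "AE x in M. g1 x \<le> g2 x"
  shows "AE x' in M. (\<integral>x. K x x' * g1 x \<partial>M) \<le> (\<integral>x. K x x' * g2 x \<partial>M)"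
  using AE_integrable_kernel_section[OF g1] AE_integrable_kernel_section[OF g2] AE_space
proof eventually_elim
  case (elim x')
  have "AE x in M. K x x' * g1 x \<le> K x x' * g2 x"
    using le AE_space by eventually_elim (use elim kernel_nonneg in \<open>auto intro: mult_left_mono\<close>)
  then show ?case
    using elim by (intro integral_mono_AE) auto
qed

lemma kernel_transform_diff_AE:
  assumes g1: "integrable M g1" and g2: "integrable M g2"
  shows "AE x' in M. (\<integral>x. K x x' * g1 x \<partial>M) - (\<integral>x. K x x' * g2 x \<partial>M)
                     = (\<integral>x. K x x' * (g1 x - g2 x) \<partial>M)"
  using AE_integrable_kernel_section[OF g1] AE_integrable_kernel_section[OF g2]
  by eventually_elim (simp add: right_diff_distrib)

lemma l1_kernel_transform_le:
  assumes g: "integrable M g"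
  shows "(\<integral>x'. \<bar>\<integral>x. K x x' * g x \<partial>M\<bar> \<partial>M) \<le> (\<integral>x. \<bar>g x\<bar> \<partial>M)"
proof -
  have abs_product: "integrable (M \<Otimes>\<^sub>M M) (\<lambda>(x, x'). \<bar>K x x' * g x\<bar>)"
    using integrable_abs[OF integrable_kernel_product[OF g]] by (simp add: case_prod_beta')
  have "(\<integral>x'. \<bar>\<integral>x. K x x' * g x \<partial>M\<bar> \<partial>M) \<le> (\<integral>x'. \<integral>x. \<bar>K x x' * g x\<bar> \<partial>M \<partial>M)"
    using integrable_kernel_transform[OF g] integrable_snd[OF abs_product]
    by (intro integral_mono) auto
  also have "\<dots> = (\<integral>x. \<integral>x'. \<bar>K x x' * g x\<bar> \<partial>M \<partial>M)"
    using Fubini_integral[of "\<lambda>x x'. \<bar>K x x' * g x\<bar>"] abs_product by simp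
  also have "\<dots> \<le> (\<integral>x. \<bar>g x\<bar> \<partial>M)"
    using integrable_fst[OF abs_product] g integral_abs_kernel_times_le
    by (intro integral_mono) auto
  finally show ?thesis .
qed

lemma l1_kernel_transform_diff_le:
  assumes g1: "integrable M g1" and g2: "integrable M g2"
  shows "(\<integral>x'. \<bar>(\<integral>x. K x x' * g1 x \<partial>M) - (\<integral>x. K x x' * g2 x \<partial>M)\<bar> \<partial>M)
         \<le> (\<integral>x. \<bar>g1 x - g2 x\<bar> \<partial>M)"
proof -
  have "(\<integral>x'. \<bar>(\<integral>x. K x x' * g1 x \<partial>M) - (\<integral>x. K x x' * g2 x \<partial>M)\<bar> \<partial>M)
        = (\<integral>x'. \<bar>\<integral>x. K x x' * (g1 x - g2 x) \<partial>M\<bar> \<partial>M)"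
    using integrable_kernel_transform[OF g1] integrable_kernel_transform[OF g2]
      integrable_kernel_transform[OF Bochner_Integration.integrable_diff[OF g1 g2]]
      kernel_transform_diff_AE[OF g1 g2]
    by (intro integral_cong_AE) auto
  also have "\<dots> \<le> (\<integral>x. \<bar>g1 x - g2 x\<bar> \<partial>M)"
    using g1 g2 by (intro l1_kernel_transform_le) auto
  finally show ?thesis .
qed

end

locale substochastic_step = sigma_finite_measure M
  for M :: "'x measure" and Ph :: "'x \<Rightarrow> 'a::finite \<Rightarrow> 'x \<Rightarrow> real" and q :: "'x \<Rightarrow> 'a \<Rightarrow> real" +
  assumes transition_measurable: "(\<lambda>(x, x'). Ph x a x') \<in> borel_measurable (M \<Otimes>\<^sub>M M)"
    and transition_nonneg: "x \<in> space M \<Longrightarrow> x' \<in> space M \<Longrightarrow> 0 \<le> Ph x a x'"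
    and transition_integrable: "x \<in> space M \<Longrightarrow> integrable M (Ph x a)"
    and transition_mass_le_1: "x \<in> space M \<Longrightarrow> (\<integral>x'. Ph x a x' \<partial>M) \<le> 1"
    and policy_measurable: "(\<lambda>x. q x a) \<in> borel_measurable M"
    and policy_nonneg: "x \<in> space M \<Longrightarrow> 0 \<le> q x a"
    and policy_mass_le_1: "x \<in> space M \<Longrightarrow> (\<Sum>a\<in>UNIV. q x a) \<le> 1"
begin

sublocale substochastic_kernel M "\<lambda>x x'. \<Sum>a\<in>UNIV. Ph x a x' * q x a"
proof
  have [measurable]: "(\<lambda>p. Ph (fst p) a (snd p)) \<in> borel_measurable (M \<Otimes>\<^sub>M M)" for a
    using transition_measurable by (simp add: case_prod_beta')
  have [measurable]: "(\<lambda>x. q x a) \<in> borel_measurable M" for a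
    by (rule policy_measurable)
  show "(\<lambda>(x, x'). \<Sum>a\<in>UNIV. Ph x a x' * q x a) \<in> borel_measurable (M \<Otimes>\<^sub>M M)"
    unfolding case_prod_beta' by measurable
  fix x assume x: "x \<in> space M"
  show "0 \<le> (\<Sum>a\<in>UNIV. Ph x a x' * q x a)" if "x' \<in> space M" for x'
    using x that by (intro sum_nonneg mult_nonneg_nonneg transition_nonneg policy_nonneg)
  show "integrable M (\<lambda>x'. \<Sum>a\<in>UNIV. Ph x a x' * q x a)"
    using x transition_integrable by auto
  have "(\<integral>x'. (\<Sum>a\<in>UNIV. Ph x a x' * q x a) \<partial>M) = (\<Sum>a\<in>UNIV. (\<integral>x'. Ph x a x' \<partial>M) * q x a)"
    using x transition_integrable by (subst Bochner_Integration.integral_sum) auto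
  also have "\<dots> \<le> (\<Sum>a\<in>UNIV. q x a)"
    using x transition_mass_le_1 policy_nonneg transition_nonneg
    by (intro sum_mono mult_left_le_one_le Bochner_Integration.integral_nonneg) auto
  also have "\<dots> \<le> 1"
    using x by (rule policy_mass_le_1)
  finally show "(\<integral>x'. (\<Sum>a\<in>UNIV. Ph x a x' * q x a) \<partial>M) \<le> 1" .
qed

lemma integrable_Pop: "integrable M d \<Longrightarrow> integrable M (Pop M Ph q d)"
  unfolding Pop_def by (rule integrable_kernel_transform)

lemma Pop_mono_AE:
  "integrable M d1 \<Longrightarrow> integrable M d2 \<Longrightarrow> AE x in M. d1 x \<le> d2 x
    \<Longrightarrow> AE x' in M. Pop M Ph q d1 x' \<le> Pop M Ph q d2 x'"
  unfolding Pop_def by (rule kernel_transform_mono_AE)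

lemma l1norm_Pop_diff_le:
  "integrable M d1 \<Longrightarrow> integrable M d2
    \<Longrightarrow> l1norm M (\<lambda>x'. Pop M Ph q d1 x' - Pop M Ph q d2 x') \<le> l1norm M (\<lambda>x. d1 x - d2 x)"
  unfolding Pop_def l1norm_def by (rule l1_kernel_transform_diff_le)

end

lemma substochastic_step_pseudo_policy:
  assumes "substochastic_step M Ph (pol h)"
    and piD_measurable: "\<And>a. (\<lambda>x. piD h x a) \<in> borel_measurable M"
    and piD_nonneg: "\<And>x a. x \<in> space M \<Longrightarrow> 0 \<le> piD h x a"
    and Ca_nonneg: "0 \<le> Ca h"
  shows "substochastic_step M Ph (pseudo_policy pol piD Ca h)"
proof -
  interpret substochastic_step M Ph "pol h" by fact
  have "(\<lambda>x. pseudo_policy pol piD Ca h x a) \<in> borel_measurable M" for a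
    unfolding pseudo_policy_def using policy_measurable piD_measurable by measurable
  moreover have "0 \<le> pseudo_policy pol piD Ca h x a" if "x \<in> space M" for x a
    unfolding pseudo_policy_def using that policy_nonneg piD_nonneg Ca_nonneg by simp
  moreover have "(\<Sum>a\<in>UNIV. pseudo_policy pol piD Ca h x a) \<le> 1" if "x \<in> space M" for x
  proof -
    have "(\<Sum>a\<in>UNIV. pseudo_policy pol piD Ca h x a) \<le> (\<Sum>a\<in>UNIV. pol h x a)"
      unfolding pseudo_policy_def by (intro sum_mono) simp
    also have "\<dots> \<le> 1"
      using that by (rule policy_mass_le_1)
    finally show ?thesis .
  qed
  ultimately show ?thesis
    by unfold_locales
      (auto intro: transition_measurable transition_nonneg transition_integrable transition_mass_le_1)
qed

lemma integrable_dpi: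
  assumes step: "\<And>k. k < h \<Longrightarrow> substochastic_step M (P k) (pol k)" and d0: "integrable M d0"
  shows "integrable M (dpi M P pol d0 h)"
  using step
proof (induction h)
  case 0
  then show ?case using d0 by simp
next
  case (Suc h)
  then show ?case
    using substochastic_step.integrable_Pop[of M "P h" "pol h"] by simp
qed

locale clipped_density_recursion =
  fixes M :: "'x measure" and P :: "nat \<Rightarrow> 'x \<Rightarrow> 'a::finite \<Rightarrow> 'x \<Rightarrow> real"
    and pibar :: "nat \<Rightarrow> 'x \<Rightarrow> 'a \<Rightarrow> real" and d0 :: "'x \<Rightarrow> real"
    and dD :: "nat \<Rightarrow> 'x \<Rightarrow> real" and H :: nat
  assumes step: "k < H \<Longrightarrow> substochastic_step M (P k) (pibar k)"
    and d0_integrable: "integrable M d0"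
    and dD_integrable: "k < H \<Longrightarrow> integrable M (dD k)"
    and dD_nonneg: "k < H \<Longrightarrow> x \<in> space M \<Longrightarrow> 0 \<le> dD k x"
    and dD_mass_le_1: "k < H \<Longrightarrow> (\<integral>x. dD k x \<partial>M) \<le> 1"
begin

abbreviation clipped :: "(nat \<Rightarrow> real) \<Rightarrow> nat \<Rightarrow> 'x \<Rightarrow> real" where
  "clipped C k x \<equiv> min (dbar M P pibar d0 dD C k x) (C k * dD k x)"

lemma integrable_dbar: "k \<le> H \<Longrightarrow> integrable M (dbar M P pibar d0 dD C k)"
proof (induction k)
  case 0
  then show ?case using d0_integrable by simp
next
  case (Suc k)
  then have k: "k < H" by simp
  have "integrable M (clipped C k)"
    using Suc k dD_integrable by (intro integrable_min) auto
  then show ?case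
    using substochastic_step.integrable_Pop[OF step[OF k]] by simp
qed

lemma integrable_clipped: "k < H \<Longrightarrow> integrable M (clipped C k)"
  using integrable_dbar dD_integrable by (intro integrable_min) auto

lemma dbar_mono_AE:
  "k \<le> H \<Longrightarrow> \<forall>j<k. C j \<le> C' j \<Longrightarrow> AE x in M. dbar M P pibar d0 dD C k x \<le> dbar M P pibar d0 dD C' k x"
proof (induction k)
  case 0
  then show ?case by simp
next
  case (Suc k)
  then have k: "k < H" by simp
  have "AE x in M. dbar M P pibar d0 dD C k x \<le> dbar M P pibar d0 dD C' k x"
    using Suc by simp
  then have "AE x in M. clipped C k x \<le> clipped C' k x"
    using AE_space
  proof eventually_elim
    case (elim x)
    have "C k * dD k x \<le> C' k * dD k x"
      using elim k Suc.prems dD_nonneg by (intro mult_right_mono) auto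
    then show ?case using elim by linarith
  qed
  then show ?case
    using substochastic_step.Pop_mono_AE[OF step[OF k] integrable_clipped[OF k] integrable_clipped[OF k]]
    by simp
qed

lemma l1norm_dbar_diff_le:
  "k \<le> H \<Longrightarrow> l1norm M (\<lambda>x. dbar M P pibar d0 dD C' k x - dbar M P pibar d0 dD C k x)
                 \<le> (\<Sum>j<k. \<bar>C' j - C j\<bar>)"
proof (induction k)
  case 0
  then show ?case by (simp add: l1norm_def)
next
  case (Suc k)
  then have k: "k < H" by simp
  have "l1norm M (\<lambda>x. dbar M P pibar d0 dD C' (Suc k) x - dbar M P pibar d0 dD C (Suc k) x)
        \<le> l1norm M (\<lambda>x. clipped C' k x - clipped C k x)"
    using substochastic_step.l1norm_Pop_diff_le[OF step[OF k] integrable_clipped[OF k] integrable_clipped[OF k]]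
    by simp
  also have "\<dots> \<le> (\<integral>x. \<bar>dbar M P pibar d0 dD C' k x - dbar M P pibar d0 dD C k x\<bar>
                          + \<bar>C' k - C k\<bar> * dD k x \<partial>M)"
    unfolding l1norm_def
  proof (rule integral_mono)
    fix x assume x: "x \<in> space M"
    have "\<bar>C' k * dD k x - C k * dD k x\<bar> = \<bar>C' k - C k\<bar> * dD k x"
      using k x dD_nonneg by (simp add: abs_mult left_diff_distrib[symmetric])
    then show "\<bar>clipped C' k x - clipped C k x\<bar>
               \<le> \<bar>dbar M P pibar d0 dD C' k x - dbar M P pibar d0 dD C k x\<bar> + \<bar>C' k - C k\<bar> * dD k x"
      using abs_min_diff_le by metis
  qed (use k integrable_clipped integrable_dbar dD_integrable in auto)
  also have "\<dots> = l1norm M (\<lambda>x. dbar M P pibar d0 dD C' k x - dbar M P pibar d0 dD C k x)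
                  + \<bar>C' k - C k\<bar> * (\<integral>x. dD k x \<partial>M)"
    unfolding l1norm_def using k integrable_dbar dD_integrable
    by (subst Bochner_Integration.integral_add) auto
  also have "\<dots> \<le> (\<Sum>j<Suc k. \<bar>C' j - C j\<bar>)"
  proof -
    have "\<bar>C' k - C k\<bar> * (\<integral>x. dD k x \<partial>M) \<le> \<bar>C' k - C k\<bar>"
      using dD_mass_le_1[OF k] by (intro mult_left_le) auto
    then show ?thesis using Suc k by simp
  qed
  finally show ?case .
qed

end

theorem proposition5:
  fixes M :: "'x measure"
    and P :: "nat \<Rightarrow> 'x \<Rightarrow> 'a::finite \<Rightarrow> 'x \<Rightarrow> real"
    and pol piD :: "nat \<Rightarrow> 'x \<Rightarrow> 'a \<Rightarrow> real"
    and d0 :: "'x \<Rightarrow> real"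
    and dD :: "nat \<Rightarrow> 'x \<Rightarrow> real"
    and Ca Cx Cx' :: "nat \<Rightarrow> real"
    and H h :: nat
  assumes M: "sigma_finite_measure M"
    and P_meas: "\<And>h a. h < H \<Longrightarrow> (\<lambda>(x, x'). P h x a x') \<in> borel_measurable (M \<Otimes>\<^sub>M M)"
    and P_nonneg: "\<And>h x a x'. h < H \<Longrightarrow> x \<in> space M \<Longrightarrow> x' \<in> space M \<Longrightarrow> 0 \<le> P h x a x'"
    and P_int: "\<And>h x a. h < H \<Longrightarrow> x \<in> space M \<Longrightarrow> integrable M (P h x a)"
    and P_one: "\<And>h x a. h < H \<Longrightarrow> x \<in> space M \<Longrightarrow> (\<integral>x'. P h x a x' \<partial>M) = 1"
    and pi_meas: "\<And>h a. h < H \<Longrightarrow> (\<lambda>x. pol h x a) \<in> borel_measurable M"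
    and pi_nonneg: "\<And>h x a. h < H \<Longrightarrow> x \<in> space M \<Longrightarrow> 0 \<le> pol h x a"
    and pi_sum: "\<And>h x. h < H \<Longrightarrow> x \<in> space M \<Longrightarrow> (\<Sum>a\<in>UNIV. pol h x a) = 1"
    and piD_meas: "\<And>h a. h < H \<Longrightarrow> (\<lambda>x. piD h x a) \<in> borel_measurable M"
    and piD_nonneg: "\<And>h x a. h < H \<Longrightarrow> x \<in> space M \<Longrightarrow> 0 \<le> piD h x a"
    and piD_sum: "\<And>h x. h < H \<Longrightarrow> x \<in> space M \<Longrightarrow> (\<Sum>a\<in>UNIV. piD h x a) = 1"
    and d0_meas: "d0 \<in> borel_measurable M"
    and d0_nonneg: "\<And>x. x \<in> space M \<Longrightarrow> 0 \<le> d0 x"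
    and d0_int: "integrable M d0"
    and d0_one: "(\<integral>x. d0 x \<partial>M) = 1"
    and dD_meas: "\<And>h. h < H \<Longrightarrow> dD h \<in> borel_measurable M"
    and dD_nonneg: "\<And>h x. h < H \<Longrightarrow> x \<in> space M \<Longrightarrow> 0 \<le> dD h x"
    and dD_int: "\<And>h. h < H \<Longrightarrow> integrable M (dD h)"
    and dD_one: "\<And>h. h < H \<Longrightarrow> (\<integral>x. dD h x \<partial>M) = 1"
    and Ca_nonneg: "\<And>h. 0 \<le> Ca h"
    and Cx_nonneg: "\<And>h. 0 \<le> Cx h"
    and Cx'_nonneg: "\<And>h. 0 \<le> Cx' h"
    and h: "h < H"
  shows "((\<forall>h'<h. Cx h' \<le> Cx' h') \<longrightarrow>
            (AE x in M. dbar M P (pseudo_policy pol piD Ca) d0 dD Cx h x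
                        \<le> dbar M P (pseudo_policy pol piD Ca) d0 dD Cx' h x))
       \<and> ((\<forall>h'<h. Cx h' \<ge> Cx' h') \<longrightarrow>
            (AE x in M. dbar M P (pseudo_policy pol piD Ca) d0 dD Cx h x
                        \<ge> dbar M P (pseudo_policy pol piD Ca) d0 dD Cx' h x))
       \<and> l1norm M (\<lambda>x. dbar M P (pseudo_policy pol piD Ca) d0 dD Cx' h x
                       - dbar M P (pseudo_policy pol piD Ca) d0 dD Cx h x)
           \<le> (\<Sum>h'<h. \<bar>Cx' h' - Cx h'\<bar>)
       \<and> \<bar>l1norm M (\<lambda>x. dpi M P pol d0 h x - dbar M P (pseudo_policy pol piD Ca) d0 dD Cx' h x)
          - l1norm M (\<lambda>x. dpi M P pol d0 h x - dbar M P (pseudo_policy pol piD Ca) d0 dD Cx h x)\<bar>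
           \<le> (\<Sum>h'<h. \<bar>Cx' h' - Cx h'\<bar>)"
proof -
  let ?pibar = "pseudo_policy pol piD Ca"
  have pol_step: "substochastic_step M (P k) (pol k)" if "k < H" for k
  proof (intro substochastic_step.intro substochastic_step_axioms.intro)
    show "sigma_finite_measure M" by (rule M)
  qed (use that P_meas P_nonneg P_int P_one pi_meas pi_nonneg pi_sum in auto)
  have pibar_step: "substochastic_step M (P k) (?pibar k)" if "k < H" for k
    using that pol_step piD_meas piD_nonneg Ca_nonneg by (intro substochastic_step_pseudo_policy)
  interpret clipped_density_recursion M P ?pibar d0 dD H
    by (intro clipped_density_recursion.intro) (use pibar_step d0_int dD_int dD_nonneg dD_one in auto)
  have "h \<le> H" using h by simp
  have "integrable M (dpi M P pol d0 h)"
    using h pol_step d0_int by (intro integrable_dpi) auto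
  from l1norm_reverse_triangle[OF this integrable_dbar[OF \<open>h \<le> H\<close>] integrable_dbar[OF \<open>h \<le> H\<close>]]
  show ?thesis
    using dbar_mono_AE[OF \<open>h \<le> H\<close>] l1norm_dbar_diff_le[OF \<open>h \<le> H\<close>]
    by (blast intro: order_trans)
qed

end
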